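(* Let $X=\{x_0,\ldots,x_m\}$, $\tilde X=\{\tilde x_1,\ldots,\tilde x_\ell\}$ (commuting), $d,d'\in\mathbb{R}^k[[\tilde X]]$ and let $c\in\mathbb{R}^\ell\langle\langle X\rangle\rangle$ be proper. Then $(d\cdot d')\circ c=(d\circ c)\sqcup\!\sqcup(d'\circ c)$, provided $d\circ c$ and $d'\circ c$ are well-defined, where $\circ$ denotes the Wiener-Fliess composition product and $d\cdot d'$ the Cauchy product.
   Context: $\mathbb{R}^\ell\langle\langle X\rangle\rangle$: formal power series in noncommuting letters of $X$ with coefficients in $\mathbb{R}^\ell$; $c$ is proper if $(c,\emptyset)=0$; $c_i$ is the $i$-th component. $\mathbb{R}^k[[\tilde X]]$: formal power series in commuting letters $\tilde x_1,\ldots,\tilde x_\ell$ with coefficients in $\mathbb{R}^k$. Shuffle product $\sqcup\!\sqcup$: bilinear, $(x_i\eta)\sqcup\!\sqcup(x_j\xi)=x_i(\eta\sqcup\!\sqcup x_j\xi)+x_j(x_i\eta\sqcup\!\sqcup\xi)$, $\eta\sqcup\!\sqcup\emptyset=\emptyset\sqcup\!\sqcup\eta=\eta$; on vector-valued series componentwise. Cauchy product: $(d\cdot d',\eta)=\sum_{\zeta\nu=\eta}(d,\zeta)(d',\nu)$ with componentwise products in $\mathbb{R}^k$. The Wiener-Fliess composition product of $d\in\mathbb{R}^k[[\tilde X]]$ and proper $c\in\mathbb{R}^\ell\langle\langle X\rangle\rangle$ is $d\circ c=\sum_{\tilde\eta\in\tilde X^\ast}(d,\tilde\eta)\,c^{\sqcup\!\sqcup\tilde\eta}\in\mathbb{R}^k\langle\langle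 X\rangle\rangle$, where $c^{\sqcup\!\sqcup\emptyset}=1$ and $c^{\sqcup\!\sqcup\tilde x_i\tilde\eta}=c_i\sqcup\!\sqcup c^{\sqcup\!\sqcup\tilde\eta}$; it is the generating series of $f_d\circ F_c$. *)

theory Defs
  imports "HOL-Analysis.Analysis" "HOL-Library.Multiset"
begin

text \<open>Commutative series in the
  commuting letters indexed by the finite type 'l are functions on monomials,
  represented as multisets of letters:  'l multiset \<Rightarrow> real^'k.\<close>

text \<open>Shuffle product of two words, as a real-valued series (with multiplicities).\<close>
fun wshuffle :: "'x list \<Rightarrow> 'x list \<Rightarrow> 'x list \<Rightarrow> real" where
  "wshuffle [] v w = (if w = v then 1 else 0)"
| "wshuffle (a # u) [] w = (if w = a # u then 1 else 0)"
| "wshuffle (a # u) (b # v) [] = 0"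
| "wshuffle (a # u) (b # v) (e # w) =
     (if e = a then wshuffle u (b # v) w else 0) + (if e = b then wshuffle (a # u) v w else 0)"

definition shuffle :: "('x::finite list \<Rightarrow> real) \<Rightarrow> ('x list \<Rightarrow> real) \<Rightarrow> ('x list \<Rightarrow> real)" where
  "shuffle c d = (\<lambda>w. \<Sum>(u, v) \<in> {(u, v). length u + length v = length w}. c u * d v * wshuffle u v w)"

definition shuffle_vec :: "('x::finite list \<Rightarrow> real^'k) \<Rightarrow> ('x list \<Rightarrow> real^'k) \<Rightarrow> ('x list \<Rightarrow> real^'k)" where
  "shuffle_vec c d = (\<lambda>w. \<chi> j. shuffle (\<lambda>v. c v $ j) (\<lambda>v. d v $ j) w)"

definition one_series :: "'x list \<Rightarrow> real" where
  "one_series = (\<lambda>w. if w = [] then 1 else 0)"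

definition proper :: "('x list \<Rightarrow> real^'l) \<Rightarrow> bool" where
  "proper c \<longleftrightarrow> c [] = 0"

definition shuffle_power :: "('x::finite list \<Rightarrow> real^'l) \<Rightarrow> 'l multiset \<Rightarrow> ('x list \<Rightarrow> real)" where
  "shuffle_power c M = fold_mset (\<lambda>i acc. shuffle (\<lambda>w. c w $ i) acc) one_series M"

definition cauchy :: "('l multiset \<Rightarrow> real^'k) \<Rightarrow> ('l multiset \<Rightarrow> real^'k) \<Rightarrow> ('l multiset \<Rightarrow> real^'k)" where
  "cauchy d d' = (\<lambda>M. \<chi> j. \<Sum>(A, B) \<in> {(A, B). A + B = M}. d A $ j * d' B $ j)"

definition wf_comp :: "('l::finite multiset \<Rightarrow> real^'k) \<Rightarrow> ('x::finite list \<Rightarrow> real^'l) \<Rightarrow> ('x list \<Rightarrow> real^'k)" where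
  "wf_comp d c = (\<lambda>w. \<chi> j. infsum (\<lambda>M. d M $ j * shuffle_power c M w) UNIV)"

definition wf_comp_defined :: "('l::finite multiset \<Rightarrow> real^'k) \<Rightarrow> ('x::finite list \<Rightarrow> real^'l) \<Rightarrow> bool" where
  "wf_comp_defined d c \<longleftrightarrow> (\<forall>w j. (\<lambda>M. d M $ j * shuffle_power c M w) summable_on UNIV)"

end

theory Submission
  imports Defs
begin

text \<open>Since c is proper, the shuffle power c^{sh M} vanishes on words shorter than the
  degree of M. Hence the coefficient of d \<circ> c at a word w is a finite sum over monomials of
  degree at most |w| (so well-definedness is automatic for proper c), and the identity becomes a
  finite computation: regroup the Cauchy product, use c^{sh (A + B)} = c^{sh A} sh c^{sh B}, which
  holds because the shuffle product is commutative and associative, and expand the shuffle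
  bilinearly.\<close>

lemma wshuffle_Nil_right: "wshuffle u [] w = (if w = u then 1 else 0)"
  by (cases u) auto

lemma wshuffle_Cons:
  "wshuffle u v (e # w) =
     (case u of [] \<Rightarrow> 0 | a # u' \<Rightarrow> if a = e then wshuffle u' v w else 0) +
     (case v of [] \<Rightarrow> 0 | b # v' \<Rightarrow> if b = e then wshuffle u v' w else 0)"
  by (cases u; cases v) (auto simp: wshuffle_Nil_right)

lemma finite_word_pairs: "finite {(u :: 'x::finite list, v :: 'x list). length u + length v = n}"
proof (rule finite_subset)
  show "finite ({u :: 'x list. set u \<subseteq> UNIV \<and> length u \<le> n} \<times>
                {v :: 'x list. set v \<subseteq> UNIV \<and> length v \<le> n})"
    using finite_lists_length_le[of "UNIV :: 'x set" n] by simp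
qed auto

lemma sum_word_pairs_Suc_Cons_left:
  "(\<Sum>(u :: 'x::finite list, v :: 'x list) \<in> {(u, v). length u + length v = Suc n}.
      case u of [] \<Rightarrow> 0 | a # u' \<Rightarrow> if a = e then h u' v else 0)
   = (\<Sum>(u, v) \<in> {(u, v). length u + length v = n}. h u v)"
proof -
  have "(\<Sum>(u, v) \<in> {(u, v). length u + length v = n}. h u v)
      = (\<Sum>(u, v) \<in> (\<lambda>(u, v). (e # u, v)) ` {(u, v). length u + length v = n}.
           case u of [] \<Rightarrow> 0 | a # u' \<Rightarrow> if a = e then h u' v else 0)"
    by (subst sum.reindex) (auto simp: inj_on_def intro!: sum.cong)
  also have "\<dots> = (\<Sum>(u, v) \<in> {(u, v). length u + length v = Suc n}.
           case u of [] \<Rightarrow> 0 | a # u' \<Rightarrow> if a = e then h u' v else 0)"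
    by (rule sum.mono_neutral_left) (fastforce simp: finite_word_pairs image_iff split: list.splits)+
  finally show ?thesis ..
qed

lemma sum_word_pairs_Suc_Cons_right:
  "(\<Sum>(u :: 'x::finite list, v :: 'x list) \<in> {(u, v). length u + length v = Suc n}.
      case v of [] \<Rightarrow> 0 | b # v' \<Rightarrow> if b = e then h u v' else 0)
   = (\<Sum>(u, v) \<in> {(u, v). length u + length v = n}. h u v)"
proof -
  have "(\<Sum>(u, v) \<in> {(u, v). length u + length v = n}. h u v)
      = (\<Sum>(u, v) \<in> (\<lambda>(u, v). (u, e # v)) ` {(u, v). length u + length v = n}.
           case v of [] \<Rightarrow> 0 | b # v' \<Rightarrow> if b = e then h u v' else 0)"
    by (subst sum.reindex) (auto simp: inj_on_def intro!: sum.cong)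
  also have "\<dots> = (\<Sum>(u, v) \<in> {(u, v). length u + length v = Suc n}.
           case v of [] \<Rightarrow> 0 | b # v' \<Rightarrow> if b = e then h u v' else 0)"
    by (rule sum.mono_neutral_left) (fastforce simp: finite_word_pairs image_iff split: list.splits)+
  finally show ?thesis ..
qed

lemma shuffle_Nil: "shuffle c d [] = c [] * d []"
proof -
  have "{(u, v). length u + length v = length ([] :: 'x list)} = {([], [])}"
    by auto
  then show ?thesis
    by (simp add: shuffle_def)
qed

lemma shuffle_Cons:
  "shuffle c d (e # w) = shuffle (\<lambda>u. c (e # u)) d w + shuffle c (\<lambda>v. d (e # v)) w"
proof -
  have "c u * d v * wshuffle u v (e # w)
      = (case u of [] \<Rightarrow> 0 | a # u' \<Rightarrow> if a = e then c (e # u') * d v * wshuffle u' v w else 0)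
      + (case v of [] \<Rightarrow> 0 | b # v' \<Rightarrow> if b = e then c u * d (e # v') * wshuffle u v' w else 0)"
    for u v
    by (cases u; cases v) (auto simp: wshuffle_Cons algebra_simps)
  then have "shuffle c d (e # w)
      = (\<Sum>(u, v) \<in> {(u, v). length u + length v = Suc (length w)}.
           case u of [] \<Rightarrow> 0 | a # u' \<Rightarrow> if a = e then c (e # u') * d v * wshuffle u' v w else 0)
      + (\<Sum>(u, v) \<in> {(u, v). length u + length v = Suc (length w)}.
           case v of [] \<Rightarrow> 0 | b # v' \<Rightarrow> if b = e then c u * d (e # v') * wshuffle u v' w else 0)"
    by (simp add: shuffle_def sum.distrib split_def)
  then show ?thesis
    by (simp only: sum_word_pairs_Suc_Cons_left sum_word_pairs_Suc_Cons_right shuffle_def)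
qed

lemma shuffle_add_left: "shuffle (\<lambda>u. c1 u + c2 u) d w = shuffle c1 d w + shuffle c2 d w"
  unfolding shuffle_def by (simp add: split_def algebra_simps sum.distrib)

lemma shuffle_add_right: "shuffle c (\<lambda>v. d1 v + d2 v) w = shuffle c d1 w + shuffle c d2 w"
  unfolding shuffle_def by (simp add: split_def algebra_simps sum.distrib)

lemma shuffle_zero_left: "shuffle (\<lambda>u. 0) d w = 0"
  unfolding shuffle_def by simp

lemma shuffle_sum_sum:
  "shuffle (\<lambda>u. \<Sum>a\<in>A. \<alpha> a * f a u) (\<lambda>v. \<Sum>b\<in>B. \<beta> b * g b v) w
   = (\<Sum>a\<in>A. \<Sum>b\<in>B. \<alpha> a * \<beta> b * shuffle (f a) (g b) w)"
proof -
  have "shuffle (\<lambda>u. \<Sum>a\<in>A. \<alpha> a * f a u) (\<lambda>v. \<Sum>b\<in>B. \<beta> b * g b v) w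
     = (\<Sum>p\<in>{(u, v). length u + length v = length w}. \<Sum>a\<in>A. \<Sum>b\<in>B.
          \<alpha> a * \<beta> b * (f a (fst p) * g b (snd p) * wshuffle (fst p) (snd p) w))"
    unfolding shuffle_def split_def
    by (simp add: sum_distrib_left sum_distrib_right mult_ac sum.swap[of _ B A])
  also have "\<dots> = (\<Sum>a\<in>A. \<Sum>b\<in>B. \<alpha> a * \<beta> b * shuffle (f a) (g b) w)"
    unfolding shuffle_def split_def
    by (simp add: sum_distrib_left) (subst sum.swap, rule sum.cong[OF refl], rule sum.swap)
  finally show ?thesis .
qed

lemma shuffle_commute: "shuffle c d = shuffle d c"
proof
  show "shuffle c d w = shuffle d c w" for w
    by (induction w arbitrary: c d) (simp_all add: shuffle_Nil shuffle_Cons)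
qed

lemma shuffle_assoc: "shuffle c (shuffle d e) = shuffle (shuffle c d) e"
proof
  show "shuffle c (shuffle d e) w = shuffle (shuffle c d) e w" for w
    by (induction w arbitrary: c d e)
      (simp_all add: shuffle_Nil shuffle_Cons shuffle_add_left shuffle_add_right)
qed

lemma shuffle_one_left: "shuffle one_series d = d"
proof
  show "shuffle one_series d w = d w" for w
  proof (induction w arbitrary: d)
    case (Cons e w)
    have "(\<lambda>u. one_series (e # u)) = (\<lambda>u. 0)"
      by (simp add: one_series_def)
    with Cons show ?case
      by (simp add: shuffle_Cons shuffle_zero_left)
  qed (simp add: shuffle_Nil one_series_def)
qed

lemma shuffle_cong_short:
  assumes "\<And>u. length u \<le> length w \<Longrightarrow> c u = c' u"
    and "\<And>v. length v \<le> length w \<Longrightarrow> d v = d' v"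
  shows "shuffle c d w = shuffle c' d' w"
  unfolding shuffle_def by (rule sum.cong) (auto simp: assms)

lemma shuffle_eq_0_if_short:
  fixes c d :: "'x::finite list \<Rightarrow> real"
  assumes "\<And>u. length u < p \<Longrightarrow> c u = 0"
    and "\<And>v. length v < q \<Longrightarrow> d v = 0"
    and "length w < p + q"
  shows "shuffle c d w = 0"
  unfolding shuffle_def
proof (intro sum.neutral, safe)
  fix u v :: "'x list"
  assume "length u + length v = length w"
  with assms(3) have "length u < p \<or> length v < q"
    by linarith
  with assms(1,2) show "c u * d v * wshuffle u v w = 0"
    by auto
qed

lemma comp_fun_commute_shuffle_component:
  "comp_fun_commute (\<lambda>i. shuffle (\<lambda>w. c w $ i))"
proof
  fix i j
  show "shuffle (\<lambda>w. c w $ i) \<circ> shuffle (\<lambda>w. c w $ j)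
      = shuffle (\<lambda>w. c w $ j) \<circ> shuffle (\<lambda>w. c w $ i)"
    by (auto simp: fun_eq_iff shuffle_assoc shuffle_commute[of "\<lambda>w. c w $ i"])
qed

lemma shuffle_power_empty [simp]: "shuffle_power c {#} = one_series"
  by (simp add: shuffle_power_def)

lemma shuffle_power_add_mset [simp]:
  "shuffle_power c (add_mset i M) = shuffle (\<lambda>w. c w $ i) (shuffle_power c M)"
  unfolding shuffle_power_def
  by (rule comp_fun_commute.fold_mset_add_mset[OF comp_fun_commute_shuffle_component])

lemma shuffle_power_union:
  "shuffle_power c (A + B) = shuffle (shuffle_power c A) (shuffle_power c B)"
  by (induction A) (simp_all add: shuffle_one_left shuffle_assoc)

lemma shuffle_power_eq_0_if_short:
  assumes "proper c" and "length w < size M"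
  shows "shuffle_power c M w = 0"
  using assms(2)
proof (induction M arbitrary: w)
  case (add i M)
  show ?case
    unfolding shuffle_power_add_mset
  proof (rule shuffle_eq_0_if_short)
    show "c u $ i = 0" if "length u < 1" for u
      using that assms(1) by (simp add: proper_def)
    show "length w < 1 + size M"
      using add.prems by simp
  qed (use add.IH in simp)
qed simp


lemma finite_multisets_size_le: "finite {M :: 'a::finite multiset. size M \<le> N}"
proof -
  have "{M :: 'a multiset. size M \<le> N} = (\<Union>n\<le>N. multisets_of_size UNIV n)"
    by (auto simp: multisets_of_size_def)
  then show ?thesis
    by auto
qed

lemma wf_comp_eq_sum_size_le:
  assumes "proper c" and "length w \<le> N"
  shows "wf_comp d c w $ j = (\<Sum>M | size M \<le> N. d M $ j * shuffle_power c M w)"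
proof -
  have "infsum (\<lambda>M. d M $ j * shuffle_power c M w) UNIV
      = infsum (\<lambda>M. d M $ j * shuffle_power c M w) {M. size M \<le> N}"
    using assms shuffle_power_eq_0_if_short[OF assms(1)]
    by (intro infsum_cong_neutral) (auto simp: not_le)
  then show ?thesis
    by (simp add: wf_comp_def finite_multisets_size_le)
qed

lemma sum_cauchy_mult_size_le:
  fixes d d' :: "'l::finite multiset \<Rightarrow> real^'k"
  assumes "\<And>M. N < size M \<Longrightarrow> f M = 0"
  shows "(\<Sum>M | size M \<le> N. cauchy d d' M $ j * f M)
       = (\<Sum>A | size A \<le> N. \<Sum>B | size B \<le> N. d A $ j * d' B $ j * f (A + B))"
proof -
  define Q where "Q = {M :: 'l multiset. size M \<le> N}"
  define P :: "('l multiset \<times> 'l multiset) set" where "P = {(A, B). size (A + B) \<le> N}"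
  define g where "g = (\<lambda>(A, B). d A $ j * d' B $ j * f (A + B))"
  have "finite Q"
    by (simp add: Q_def finite_multisets_size_le)
  have "P \<subseteq> Q \<times> Q"
    by (auto simp: P_def Q_def)
  have "(\<Sum>M\<in>Q. cauchy d d' M $ j * f M)
      = (\<Sum>M\<in>Q. \<Sum>p | p \<in> P \<and> (\<lambda>(A, B). A + B) p = M. g p)"
  proof (rule sum.cong[OF refl])
    fix M assume "M \<in> Q"
    then have "{p \<in> P. (\<lambda>(A, B). A + B) p = M} = {(A, B). A + B = M}"
      by (auto simp: P_def Q_def)
    then show "cauchy d d' M $ j * f M = (\<Sum>p | p \<in> P \<and> (\<lambda>(A, B). A + B) p = M. g p)"
      by (auto simp: cauchy_def g_def sum_distrib_right intro!: sum.cong)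
  qed
  also have "\<dots> = sum g P"
    using \<open>finite Q\<close> \<open>P \<subseteq> Q \<times> Q\<close>
    by (intro sum.group) (auto intro: finite_subset simp: P_def Q_def)
  also have "\<dots> = sum g (Q \<times> Q)"
    using \<open>finite Q\<close> \<open>P \<subseteq> Q \<times> Q\<close>
    by (intro sum.mono_neutral_left) (auto simp: P_def g_def, metis assms not_le size_union)
  also have "\<dots> = (\<Sum>A\<in>Q. \<Sum>B\<in>Q. d A $ j * d' B $ j * f (A + B))"
    by (simp add: g_def sum.cartesian_product)
  finally show ?thesis
    by (simp add: Q_def)
qed

theorem theorem12:
  fixes d d' :: "'l::finite multiset \<Rightarrow> real^'k"
    and c :: "'x::finite list \<Rightarrow> real^'l"
  assumes "proper c"
    and "wf_comp_defined d c"
    and "wf_comp_defined d' c"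
  shows "wf_comp (cauchy d d') c = shuffle_vec (wf_comp d c) (wf_comp d' c)"
proof (intro ext iffD2[OF vec_eq_iff] allI)
  fix w :: "'x list" and j :: 'k
  let ?N = "length w"
  let ?pow = "shuffle_power c"
  have "wf_comp (cauchy d d') c w $ j = (\<Sum>M | size M \<le> ?N. cauchy d d' M $ j * ?pow M w)"
    using assms(1) by (rule wf_comp_eq_sum_size_le) simp
  also have "\<dots> = (\<Sum>A | size A \<le> ?N. \<Sum>B | size B \<le> ?N. d A $ j * d' B $ j * ?pow (A + B) w)"
    using shuffle_power_eq_0_if_short[OF assms(1)] by (intro sum_cauchy_mult_size_le) simp
  also have "\<dots> = (\<Sum>A | size A \<le> ?N. \<Sum>B | size B \<le> ?N.
                      d A $ j * d' B $ j * shuffle (?pow A) (?pow B) w)"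
    by (simp only: shuffle_power_union)
  also have "\<dots> = shuffle (\<lambda>u. \<Sum>A | size A \<le> ?N. d A $ j * ?pow A u)
                            (\<lambda>v. \<Sum>B | size B \<le> ?N. d' B $ j * ?pow B v) w"
    by (rule shuffle_sum_sum[symmetric])
  also have "\<dots> = shuffle (\<lambda>u. wf_comp d c u $ j) (\<lambda>v. wf_comp d' c v $ j) w"
    using assms(1) by (intro shuffle_cong_short) (simp_all add: wf_comp_eq_sum_size_le)
  also have "\<dots> = shuffle_vec (wf_comp d c) (wf_comp d' c) w $ j"
    by (simp add: shuffle_vec_def)
  finally show "wf_comp (cauchy d d') c w $ j = shuffle_vec (wf_comp d c) (wf_comp d' c) w $ j" .
qed

end
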